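(* Let $\mathcal{K}\subseteq\wp(\mathcal{G})$ be coherent and let $A_1,\ldots,A_n\in\mathcal{K}$ ($n\geq 1$). Suppose $B\subseteq\mathcal{G}$ is such that for each sequence $\langle g_1,\ldots,g_n\rangle\in A_1\times\cdots\times A_n$, either $0\in\mathcal{E}(\{g_1,\ldots,g_n\})$, or there is some $f\in B$ with $f\in\mathcal{E}(\{g_1,\ldots,g_n\})$. Then $B\in\mathcal{K}$.
   Context: $\Omega$ is a non-empty set and $\mathcal{G}$ is the set of bounded functions $\Omega\to\mathbb{R}$. $f\geq g$ means pointwise $\geq$; $f\gneq g$ means $f\geq g$ and $f\neq g$; $\mathcal{G}_{\gneq 0}=\{f: f\gneq 0\}$. $\mathrm{posi}(B)=\{\sum_{i=1}^m\lambda_i h_i: m\geq1,\lambda_i>0,h_i\in B\}$, and $\mathcal{E}(E):=\mathrm{posi}(E\cup\mathcal{G}_{\gneq 0})$. A set $\mathcal{K}\subseteq\wp(\mathcal{G})$ is coherent if: (K$_\emptyset$) $\emptyset\notin\mathcal{K}$; (K$_0$) if $A\in\mathcal{K}$ then $A\setminus\{0\}\in\mathcal{K}$; (K$_{\gneq0}$) if $g\in\mathcal{G}_{\gneq0}$ then $\{g\}\in\mathcal{K}$; (K$_\supseteq$) if $A\in\mathcal{K}$ and $B\supseteq A$ then $B\in\mathcal{K}$; (K$_{\mathrm{Dom}}$) if $A\in\mathcal{K}$ and for each $g\in A$, $f_g$ is a gamble with $f_g\geq g$, then $\{f_g: g\in A\}\in\mathcal{K}$; (K$_{\mathrm{Add}}$)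 if $A_1,\ldots,A_n\in\mathcal{K}$ (finitely many) and for each $\langle g_1,\ldots,g_n\rangle\in A_1\times\cdots\times A_n$, $f_{\langle g_1,\ldots,g_n\rangle}$ is some member of $\mathrm{posi}(\{g_1,\ldots,g_n\})$, then $\{f_{\langle g_1,\ldots,g_n\rangle}:\langle g_1,\ldots,g_n\rangle\in A_1\times\cdots\times A_n\}\in\mathcal{K}$. *)

theory Defs
  imports "HOL-Analysis.Analysis"
begin

text \<open>Omega is the (nonempty) type 'a. Gambles are bounded real-valued functions on 'a.\<close>

definition gambles :: "('a \<Rightarrow> real) set" where
  "gambles = {f. bounded (range f)}"

definition gneq :: "('a \<Rightarrow> real) \<Rightarrow> ('a \<Rightarrow> real) \<Rightarrow> bool" where
  "gneq f g \<longleftrightarrow> (\<forall>x. f x \<ge> g x) \<and> f \<noteq> g"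

definition gpos :: "('a \<Rightarrow> real) set" where
  "gpos = {f \<in> gambles. gneq f (\<lambda>x. 0)}"

definition posi :: "('a \<Rightarrow> real) set \<Rightarrow> ('a \<Rightarrow> real) set" where
  "posi B = {f. \<exists>m::nat. m \<ge> 1 \<and> (\<exists>c h. (\<forall>i<m. c i > (0::real) \<and> h i \<in> B)
                 \<and> f = (\<lambda>x. \<Sum>i<m. c i * h i x))}"

definition natext :: "('a \<Rightarrow> real) set \<Rightarrow> ('a \<Rightarrow> real) set" where
  "natext E = posi (E \<union> gpos)"

text \<open>Tuples in A_1 x ... x A_n are represented as lists of length n.\<close>

definition coherent :: "('a \<Rightarrow> real) set set \<Rightarrow> bool" where
  "coherent K \<longleftrightarrow>
     (\<forall>A\<in>K. A \<subseteq> gambles) \<and>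
     {} \<notin> K \<and>
     (\<forall>A\<in>K. A - {\<lambda>x. 0} \<in> K) \<and>
     (\<forall>g\<in>gpos. {g} \<in> K) \<and>
     (\<forall>A\<in>K. \<forall>B. A \<subseteq> B \<and> B \<subseteq> gambles \<longrightarrow> B \<in> K) \<and>
     (\<forall>A\<in>K. \<forall>F. (\<forall>g\<in>A. F g \<in> gambles \<and> (\<forall>x. F g x \<ge> g x)) \<longrightarrow> F ` A \<in> K) \<and>
     (\<forall>n::nat. \<forall>As::nat \<Rightarrow> ('a \<Rightarrow> real) set. \<forall>F::('a \<Rightarrow> real) list \<Rightarrow> ('a \<Rightarrow> real).
        (\<forall>i<n. As i \<in> K) \<and>
        (\<forall>gs. length gs = n \<and> (\<forall>i<n. gs ! i \<in> As i) \<longrightarrow> F gs \<in> posi (set gs))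
        \<longrightarrow> F ` {gs. length gs = n \<and> (\<forall>i<n. gs ! i \<in> As i)} \<in> K)"

end

theory Submission
  imports Defs
begin

text \<open>If some \<open>f \<in> B\<close> is itself positive, \<open>B\<close> contains the desirable singleton \<open>{f}\<close>.
  Otherwise every witness \<open>t \<in> {0} \<union> B\<close> lying in \<open>\<E>({g\<^sub>1,\<dots>,g\<^sub>n})\<close> dominates a genuine
  positive combination of \<open>g\<^sub>1,\<dots>,g\<^sub>n\<close>: dropping the positive summands of \<open>t\<close> can only make it
  smaller, and not all summands are positive, since then \<open>t\<close> would be positive.
  Additivity applied to these combinations, followed by dominance, yields \<open>{0} \<union> B \<in> K\<close>;
  removing \<open>0\<close> and enlarging again gives \<open>B \<in> K\<close>.\<close>

definition tuples :: "nat \<Rightarrow> (nat \<Rightarrow> 'b set) \<Rightarrow> 'b list set" where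
  "tuples n As = {gs. length gs = n \<and> (\<forall>i<n. gs ! i \<in> As i)}"

lemma posiE:
  assumes "f \<in> posi B"
  obtains m :: nat and c :: "nat \<Rightarrow> real" and h
  where "m \<ge> 1" "\<forall>i<m. 0 < c i \<and> h i \<in> B" "f = (\<lambda>x. \<Sum>i<m. c i * h i x)"
  using assms that unfolding posi_def by blast

lemma posiI:
  "(m::nat) \<ge> 1 \<Longrightarrow> \<forall>i<m. 0 < c i \<and> h i \<in> B \<Longrightarrow> (\<lambda>x. \<Sum>i<m. c i * h i x) \<in> posi B"
  unfolding posi_def by blast

lemma posi_single: "c > 0 \<Longrightarrow> h \<in> B \<Longrightarrow> (\<lambda>x. c * h x) \<in> posi B"
  using posiI[of 1 "\<lambda>_. c" "\<lambda>_. h" B] by simp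

lemma posi_add_term:
  assumes "f \<in> posi B" "c > 0" "h \<in> B"
  shows "(\<lambda>x. f x + c * h x) \<in> posi B"
proof -
  obtain m :: nat and d :: "nat \<Rightarrow> real" and k
    where m: "m \<ge> 1" "\<forall>i<m. 0 < d i \<and> k i \<in> B" "f = (\<lambda>x. \<Sum>i<m. d i * k i x)"
    using assms(1) by (rule posiE)
  define d' where "d' = d(m := c)"
  define k' where "k' = k(m := h)"
  have "f x + c * h x = (\<Sum>i<Suc m. d' i * k' i x)" for x
  proof -
    have "(\<Sum>i<m. d' i * k' i x) = f x"
      unfolding m(3) d'_def k'_def by (intro sum.cong) auto
    then show ?thesis by (simp add: d'_def k'_def)
  qed
  moreover have "\<forall>i<Suc m. 0 < d' i \<and> k' i \<in> B"
    using m(2) assms(2,3) by (auto simp: d'_def k'_def less_Suc_eq)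
  ultimately show ?thesis
    using posiI[of "Suc m" d' k' B] by simp
qed

lemma posi_induct [consumes 1, case_names single add_term]:
  assumes "f \<in> posi B"
    and single: "\<And>c h. c > 0 \<Longrightarrow> h \<in> B \<Longrightarrow> Q (\<lambda>x. c * h x)"
    and add_term: "\<And>f c h. f \<in> posi B \<Longrightarrow> Q f \<Longrightarrow> c > 0 \<Longrightarrow> h \<in> B \<Longrightarrow> Q (\<lambda>x. f x + c * h x)"
  shows "Q f"
proof -
  obtain m :: nat and c :: "nat \<Rightarrow> real" and h
    where m: "m \<ge> 1" "\<forall>i<m. 0 < c i \<and> h i \<in> B" "f = (\<lambda>x. \<Sum>i<m. c i * h i x)"
    using assms(1) by (rule posiE)
  have "Q (\<lambda>x. \<Sum>i<k. c i * h i x)" if "k \<ge> 1" "\<forall>i<k. 0 < c i \<and> h i \<in> B" for k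
    using that
  proof (induction k)
    case 0
    then show ?case by simp
  next
    case (Suc k)
    show ?case
    proof (cases "k = 0")
      case True
      then show ?thesis using Suc.prems single by simp
    next
      case False
      then have "k \<ge> 1" "\<forall>i<k. 0 < c i \<and> h i \<in> B" using Suc.prems by auto
      moreover from this have "(\<lambda>x. \<Sum>i<k. c i * h i x) \<in> posi B"
        by (rule posiI)
      ultimately show ?thesis
        using Suc add_term[of "\<lambda>x. \<Sum>i<k. c i * h i x" "c k" "h k"] by simp
    qed
  qed
  then show ?thesis using m by simp
qed

lemma posi_nonneg:
  assumes "f \<in> posi P" "\<And>q x. q \<in> P \<Longrightarrow> q x \<ge> 0"
  shows "f x \<ge> 0"
  using assms(1) by (induction rule: posi_induct) (auto simp: assms(2))

lemma posi_union_nonneg_cases: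
  assumes "t \<in> posi (E \<union> P)" "\<And>q x. q \<in> P \<Longrightarrow> q x \<ge> 0"
  shows "t \<in> posi P \<or> (\<exists>p\<in>posi E. \<forall>x. p x \<le> t x)"
  using assms(1)
proof (induction rule: posi_induct)
  case (single c h)
  then show ?case by (auto intro: posi_single)
next
  case (add_term f c h)
  have ch_nonneg: "c * h x \<ge> 0" if "h \<in> P" for x
    using that add_term.hyps(2) assms(2) by (meson less_imp_le mult_nonneg_nonneg)
  from add_term.IH show ?case
  proof
    assume f: "f \<in> posi P"
    show ?thesis
    proof (cases "h \<in> P")
      case True
      then show ?thesis using f add_term.hyps by (simp add: posi_add_term)
    next
      case False
      then have "(\<lambda>x. c * h x) \<in> posi E" using add_term.hyps by (auto intro: posi_single)
      moreover have "\<forall>x. c * h x \<le> f x + c * h x"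
        using posi_nonneg[of f P] f assms(2) by simp
      ultimately show ?thesis by (intro disjI2 bexI[of _ "\<lambda>x. c * h x"]) auto
    qed
  next
    assume "\<exists>p\<in>posi E. \<forall>x. p x \<le> f x"
    then obtain p where p: "p \<in> posi E" "\<forall>x. p x \<le> f x" by blast
    show ?thesis
    proof (cases "h \<in> P")
      case True
      then show ?thesis using p ch_nonneg by (intro disjI2 bexI[OF _ p(1)]) (auto intro: add_increasing2)
    next
      case False
      then show ?thesis
        using p add_term.hyps
        by (intro disjI2 bexI[OF _ posi_add_term[OF p(1)]]) (auto intro: add_right_mono)
    qed
  qed
qed

lemma gpos_nonneg: "h \<in> gpos \<Longrightarrow> h x \<ge> 0"
  unfolding gpos_def gneq_def by blast

lemma gpos_nonzero: "h \<in> gpos \<Longrightarrow> \<exists>x. h x \<noteq> 0"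
  unfolding gpos_def gneq_def fun_eq_iff by blast

lemma posi_gpos_nonneg_nonzero:
  assumes "f \<in> posi gpos"
  shows "(\<forall>x. f x \<ge> 0) \<and> (\<exists>x. f x \<noteq> 0)"
  using assms
proof (induction rule: posi_induct)
  case (single c h)
  then show ?case
    using gpos_nonneg[of h] gpos_nonzero[of h] by simp
next
  case (add_term f c h)
  have ch_nonneg: "c * h y \<ge> 0" for y
    using add_term.hyps gpos_nonneg[of h y] by (simp add: less_imp_le)
  from add_term.IH obtain x where "f x \<noteq> 0"
    by blast
  then have "f x + c * h x \<noteq> 0"
    using add_term.IH ch_nonneg[of x] by (metis add_nonneg_eq_0_iff)
  moreover have "f y + c * h y \<ge> 0" for y
    using add_term.IH ch_nonneg[of y] by simp
  ultimately show ?case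
    by blast
qed

lemma natext_dominates_posi:
  assumes "t \<in> natext E" "t \<in> gambles" "t \<notin> gpos"
  obtains p where "p \<in> posi E" "\<forall>x. p x \<le> t x"
proof -
  have "t \<notin> posi gpos"
    using assms(2,3) posi_gpos_nonneg_nonzero by (auto simp: gpos_def gneq_def)
  moreover have "t \<in> posi gpos \<or> (\<exists>p\<in>posi E. \<forall>x. p x \<le> t x)"
    using assms(1) unfolding natext_def by (rule posi_union_nonneg_cases) (rule gpos_nonneg)
  ultimately show ?thesis
    using that by blast
qed

lemma coherent_superset:
  assumes "coherent K" "A \<in> K" "A \<subseteq> C" "C \<subseteq> gambles"
  shows "C \<in> K"
proof -
  have "\<forall>A\<in>K. \<forall>B. A \<subseteq> B \<and> B \<subseteq> gambles \<longrightarrow> B \<in> K"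
    using assms(1) unfolding coherent_def by (elim conjE)
  then show ?thesis
    using assms(2-4) by blast
qed

lemma coherent_singleton_gpos: "coherent K \<Longrightarrow> g \<in> gpos \<Longrightarrow> {g} \<in> K"
  unfolding coherent_def by (elim conjE) blast

lemma coherent_remove_zero: "coherent K \<Longrightarrow> A \<in> K \<Longrightarrow> A - {\<lambda>x. 0} \<in> K"
  unfolding coherent_def by (elim conjE) blast

lemma coherent_insert_zero:
  assumes "coherent K" "insert (\<lambda>x. 0) B \<in> K" "B \<subseteq> gambles"
  shows "B \<in> K"
proof -
  have "insert (\<lambda>x. 0) B - {\<lambda>x. 0} \<in> K"
    using assms(1,2) by (rule coherent_remove_zero)
  then have "B - {\<lambda>x. 0} \<in> K"
    by simp
  from coherent_superset[OF assms(1) this _ assms(3)] show ?thesis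
    by blast
qed

lemma coherent_dominance:
  assumes "coherent K" "A \<in> K" "\<And>g. g \<in> A \<Longrightarrow> F g \<in> gambles \<and> (\<forall>x. g x \<le> F g x)"
  shows "F ` A \<in> K"
proof -
  have "\<forall>A\<in>K. \<forall>F. (\<forall>g\<in>A. F g \<in> gambles \<and> (\<forall>x. F g x \<ge> g x)) \<longrightarrow> F ` A \<in> K"
    using assms(1) unfolding coherent_def by (elim conjE)
  then show ?thesis
    using assms(2,3) by (simp add: Ball_def)
qed

lemma coherent_additivity:
  assumes "coherent K" "\<forall>i<n. As i \<in> K" "\<And>gs. gs \<in> tuples n As \<Longrightarrow> F gs \<in> posi (set gs)"
  shows "F ` tuples n As \<in> K"
proof -
  have "\<forall>n::nat. \<forall>As. \<forall>F::('a \<Rightarrow> real) list \<Rightarrow> ('a \<Rightarrow> real).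
          (\<forall>i<n. As i \<in> K) \<and>
          (\<forall>gs. length gs = n \<and> (\<forall>i<n. gs ! i \<in> As i) \<longrightarrow> F gs \<in> posi (set gs))
          \<longrightarrow> F ` {gs. length gs = n \<and> (\<forall>i<n. gs ! i \<in> As i)} \<in> K"
    using assms(1) unfolding coherent_def by (elim conjE)
  from this[rule_format, of n As F] show ?thesis
    using assms(2,3) unfolding tuples_def by blast
qed

lemma coherent_dominating_tuples:
  assumes K: "coherent K" and As: "\<forall>i<n. As i \<in> K" and C: "C \<subseteq> gambles"
    and dom: "\<forall>gs\<in>tuples n As. \<exists>p\<in>posi (set gs). \<exists>t\<in>C. \<forall>x. p x \<le> t x"
  shows "C \<in> K"
proof -
  from dom obtain F T where FT: "\<forall>gs\<in>tuples n As. F gs \<in> posi (set gs) \<and> T gs \<in> C \<and> (\<forall>x. F gs x \<le> T gs x)"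
    by metis
  have "F ` tuples n As \<in> K"
    using FT by (intro coherent_additivity[OF K As]) blast
  moreover define G where "G = T \<circ> inv_into (tuples n As) F"
  have G: "G a \<in> C \<and> (\<forall>x. a x \<le> G a x)" if "a \<in> F ` tuples n As" for a
    using FT inv_into_into[OF that] f_inv_into_f[OF that] unfolding G_def by (metis comp_apply)
  ultimately have "G ` F ` tuples n As \<in> K"
    using C by (intro coherent_dominance[OF K]) auto
  then show ?thesis
    by (rule coherent_superset[OF K _ _ C]) (use G in blast)
qed

theorem mainTheorem2:
  fixes K :: "('a \<Rightarrow> real) set set"
    and As :: "nat \<Rightarrow> ('a \<Rightarrow> real) set"
    and B :: "('a \<Rightarrow> real) set"
    and n :: nat
  assumes "coherent K"
    and "n \<ge> 1"
    and "\<forall>i<n. As i \<in> K"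
    and "B \<subseteq> gambles"
    and "\<forall>gs. length gs = n \<and> (\<forall>i<n. gs ! i \<in> As i) \<longrightarrow>
           ((\<lambda>x. 0) \<in> natext (set gs) \<or> (\<exists>f\<in>B. f \<in> natext (set gs)))"
  shows "B \<in> K"
proof (cases "\<exists>f\<in>B. f \<in> gpos")
  case True
  then obtain f where f: "f \<in> B" "f \<in> gpos" by blast
  have "{f} \<in> K"
    using assms(1) f(2) by (rule coherent_singleton_gpos)
  from coherent_superset[OF assms(1) this _ assms(4)] show ?thesis
    using f(1) by blast
next
  case False
  have insert_zero_gambles: "insert (\<lambda>x. 0) B \<subseteq> gambles"
    using assms(4) by (simp add: gambles_def)
  have "\<exists>p\<in>posi (set gs). \<exists>t\<in>insert (\<lambda>x. 0) B. \<forall>x. p x \<le> t x"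
    if "gs \<in> tuples n As" for gs
  proof -
    have "(\<lambda>x. 0) \<in> natext (set gs) \<or> (\<exists>f\<in>B. f \<in> natext (set gs))"
      using that unfolding tuples_def by (intro assms(5)[rule_format]) simp
    then obtain t where t: "t \<in> insert (\<lambda>x. 0) B" "t \<in> natext (set gs)"
      by blast
    moreover have "t \<notin> gpos"
      using t(1) False gpos_nonzero[of "\<lambda>x. 0"] by auto
    ultimately obtain p where "p \<in> posi (set gs)" "\<forall>x. p x \<le> t x"
      using natext_dominates_posi insert_zero_gambles by blast
    with t(1) show ?thesis
      by (meson bexI)
  qed
  then have "insert (\<lambda>x. 0) B \<in> K"
    using coherent_dominating_tuples[OF assms(1,3) insert_zero_gambles] by blast
  then show ?thesis
    using assms(1,4) coherent_insert_zero by blast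
qed

end
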